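(* Let $q\in\mathrm{prob}(\{0,1\}^2)$. The set $C_\le:=\{(\pi_1,\chi^{(2)}_{1|1}-\chi^{(1)}_{1|1}):(\pi,\chi)\in\Theta_2,\ \mu(\pi,\chi)=q,\ \chi^{(1)}_{0|0}\le\chi^{(2)}_{0|0}\}$ is nonempty and equals the set of all $(\mathrm{Pr},\Delta\mathrm{Se})\in[0,1]\times[-1,1]$ satisfying $q_{01}-q_{10}\le\mathrm{Pr}\,\Delta\mathrm{Se}\le\min\{q_{01},\ q_{01}-q_{10}+1-\mathrm{Pr}\}$.
   Context: $\mathrm{prob}(\mathcal{X})$ is the set of probability densities on a finite set $\mathcal{X}$; $\mathrm{markov}(\mathcal{X},\mathcal{Y})$ the set of maps $(x,y)\mapsto p_{y|x}$ with $p_{\cdot|x}\in\mathrm{prob}(\mathcal{Y})$. $\Theta_2:=\mathrm{prob}(\{0,1\})\times\mathrm{markov}(\{0,1\},\{0,1\}^2)$, $\mu(\pi,\chi)_j:=\sum_{i=0}^1\pi_i\chi_{j|i}$ for $j\in\{0,1\}^2$, $\chi^{(1)}_{\iota|i}:=\chi_{\iota0|i}+\chi_{\iota1|i}$, $\chi^{(2)}_{\iota|i}:=\chi_{0\iota|i}+\chi_{1\iota|i}$. *)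

theory Defs
  imports Complex_Main
begin

text \<open>The two-element set {0,1} is represented by bool (0 = False, 1 = True);
  {0,1}^2 by bool \<times> bool, where the string j1 j2 corresponds to the pair (j1, j2).\<close>

definition prob_dens :: "('a::finite \<Rightarrow> real) set" where
  "prob_dens = {p. (\<forall>x. 0 \<le> p x) \<and> (\<Sum>x\<in>UNIV. p x) = 1}"

text \<open>A Markov kernel: k x y is p_{y|x}.\<close>
definition markov :: "('a::finite \<Rightarrow> 'b::finite \<Rightarrow> real) set" where
  "markov = {k. \<forall>x. k x \<in> prob_dens}"

definition Theta2 :: "((bool \<Rightarrow> real) \<times> (bool \<Rightarrow> bool \<times> bool \<Rightarrow> real)) set" where
  "Theta2 = prob_dens \<times> markov"

definition mu :: "(bool \<Rightarrow> real) \<Rightarrow> (bool \<Rightarrow> bool \<times> bool \<Rightarrow> real) \<Rightarrow> bool \<times> bool \<Rightarrow> real" where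
  "mu \<pi> \<chi> j = (\<Sum>i\<in>UNIV. \<pi> i * \<chi> i j)"

text \<open>chi1 \<chi> i \<iota> = \<chi>^{(1)}_{\<iota>|i}, chi2 \<chi> i \<iota> = \<chi>^{(2)}_{\<iota>|i}.\<close>
definition chi1 :: "(bool \<Rightarrow> bool \<times> bool \<Rightarrow> real) \<Rightarrow> bool \<Rightarrow> bool \<Rightarrow> real" where
  "chi1 \<chi> i \<iota> = \<chi> i (\<iota>, False) + \<chi> i (\<iota>, True)"

definition chi2 :: "(bool \<Rightarrow> bool \<times> bool \<Rightarrow> real) \<Rightarrow> bool \<Rightarrow> bool \<Rightarrow> real" where
  "chi2 \<chi> i \<iota> = \<chi> i (False, \<iota>) + \<chi> i (True, \<iota>)"

definition C_le :: "(bool \<times> bool \<Rightarrow> real) \<Rightarrow> (real \<times> real) set" where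
  "C_le q = {(\<pi> True, chi2 \<chi> True True - chi1 \<chi> True True) | \<pi> \<chi>.
              (\<pi>, \<chi>) \<in> Theta2 \<and> mu \<pi> \<chi> = q \<and> chi1 \<chi> False False \<le> chi2 \<chi> False False}"

end

theory Submission
  imports Defs
begin

text \<open>Write \<open>x i j\<close> for the joint density \<open>\<pi>\<^sub>i \<chi>\<^sub>j\<^sub>|\<^sub>i\<close>. Membership of \<open>(Pr, \<Delta>Se)\<close> in \<open>C_le q\<close>
  is equivalent to \<open>|\<Delta>Se| \<le> 1\<close> together with a nonnegative joint density with second
  marginal \<open>q\<close>, first marginal \<open>(1 - Pr, Pr)\<close>, \<open>x\<^sub>0(01) \<le> x\<^sub>0(10)\<close> and
  \<open>x\<^sub>1(01) - x\<^sub>1(10) = Pr \<Delta>Se\<close>; the kernel is recovered by normalising rows.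
  Since \<open>q\<^sub>0\<^sub>1 - q\<^sub>1\<^sub>0 = (x\<^sub>0(01) - x\<^sub>0(10)) + Pr \<Delta>Se\<close>, the stated bounds follow by linear arithmetic,
  and conversely they are exactly what is needed to choose the four entries of the row \<open>x\<^sub>1\<close>
  below \<open>q\<close> with the prescribed sum and difference.\<close>

lemma sum_UNIV_bool_pair:
  "(\<Sum>j\<in>UNIV. f j) = f (False, False) + f (False, True) + f (True, False) + f (True, True)"
proof -
  have UNIV_eq: "(UNIV :: (bool \<times> bool) set) = {(False, False), (False, True), (True, False), (True, True)}"
    by auto
  show ?thesis unfolding UNIV_eq by (simp add: add.assoc)
qed

lemma prob_dens_bool_iff: "p \<in> prob_dens \<longleftrightarrow> (\<forall>i. 0 \<le> p i) \<and> p False + p True = 1"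
  by (simp add: prob_dens_def UNIV_bool)

lemma prob_dens_bool_pair_iff:
  "p \<in> prob_dens \<longleftrightarrow>
     (\<forall>j. 0 \<le> p j) \<and> p (False, False) + p (False, True) + p (True, False) + p (True, True) = 1"
  by (simp add: prob_dens_def sum_UNIV_bool_pair)

lemma markov_disintegration:
  fixes x :: "'a::finite \<Rightarrow> 'b::finite \<Rightarrow> real"
  assumes nonneg: "\<And>i j. 0 \<le> x i j" and k: "k \<in> markov"
  obtains \<chi> where "\<chi> \<in> markov" and "\<And>i j. sum (x i) UNIV * \<chi> i j = x i j"
    and "\<And>i. sum (x i) UNIV = 0 \<Longrightarrow> \<chi> i = k i"
proof
  define \<chi> where "\<chi> = (\<lambda>i. if sum (x i) UNIV = 0 then k i else (\<lambda>j. x i j / sum (x i) UNIV))"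
  show "\<chi> i = k i" if "sum (x i) UNIV = 0" for i
    using that by (simp add: \<chi>_def)
  have zero_row: "x i j = 0" if "sum (x i) UNIV = 0" for i j
    using that nonneg by (simp add: sum_nonneg_eq_0_iff)
  show "sum (x i) UNIV * \<chi> i j = x i j" for i j
    by (cases "sum (x i) UNIV = 0") (simp_all add: \<chi>_def zero_row)
  have "\<chi> i \<in> prob_dens" for i
  proof (cases "sum (x i) UNIV = 0")
    case True
    then show ?thesis using k by (simp add: \<chi>_def markov_def)
  next
    case False
    moreover have "0 \<le> sum (x i) UNIV" by (simp add: nonneg sum_nonneg)
    ultimately show ?thesis
      by (simp add: \<chi>_def prob_dens_def nonneg sum_divide_distrib[symmetric])
  qed
  then show "\<chi> \<in> markov" by (simp add: markov_def)
qed

definition admissible_joint ::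
    "(bool \<times> bool \<Rightarrow> real) \<Rightarrow> real \<Rightarrow> real \<Rightarrow> (bool \<Rightarrow> bool \<times> bool \<Rightarrow> real) \<Rightarrow> bool" where
  "admissible_joint q P m x \<longleftrightarrow>
     (\<forall>i j. 0 \<le> x i j) \<and> (\<forall>j. x False j + x True j = q j) \<and> sum (x True) UNIV = P \<and>
     x False (False, True) \<le> x False (True, False) \<and>
     x True (False, True) - x True (True, False) = m"

lemma admissible_joint_bounds:
  assumes "admissible_joint q P m x" and "q \<in> prob_dens"
  shows "0 \<le> P" and "P \<le> 1" and "q (False, True) - q (True, False) \<le> m"
    and "m \<le> q (False, True)" and "m \<le> q (False, True) - q (True, False) + 1 - P"
proof -
  have nonneg: "\<And>i j. 0 \<le> x i j" and marg: "\<And>j. x False j + x True j = q j"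
    and row1: "sum (x True) UNIV = P" and le: "x False (False, True) \<le> x False (True, False)"
    and m: "x True (False, True) - x True (True, False) = m"
    using assms(1) by (auto simp: admissible_joint_def)
  have "sum (x False) UNIV + P = 1"
    using assms(2) by (simp add: row1[symmetric] sum.distrib[symmetric] marg prob_dens_def)
  moreover have "x False (True, False) \<le> sum (x False) UNIV"
    by (rule member_le_sum) (simp_all add: nonneg)
  moreover have "0 \<le> P" unfolding row1[symmetric] by (simp add: sum_nonneg nonneg)
  moreover note marg[of "(False, True)"] marg[of "(True, False)"] le m
    nonneg[of False "(False, True)"] nonneg[of True "(True, False)"]
  ultimately show "0 \<le> P" and "P \<le> 1" and "q (False, True) - q (True, False) \<le> m"
    and "m \<le> q (False, True)" and "m \<le> q (False, True) - q (True, False) + 1 - P"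
    by linarith+
qed

lemma admissible_joint_exists:
  assumes "q \<in> prob_dens" and "0 \<le> P" and "\<bar>m\<bar> \<le> P"
    and "q (False, True) - q (True, False) \<le> m" and "m \<le> q (False, True)"
    and "m \<le> q (False, True) - q (True, False) + 1 - P"
  shows "\<exists>x. admissible_joint q P m x"
proof -
  have q: "0 \<le> q (False, False)" "0 \<le> q (False, True)" "0 \<le> q (True, False)"
    "0 \<le> q (True, True)" "q (False, False) + q (False, True) + q (True, False) + q (True, True) = 1"
    using assms(1) by (auto simp: prob_dens_bool_pair_iff)
  text \<open>The row \<open>x\<^sub>1 = (g, c, d, h)\<close>: the least \<open>d\<close> with \<open>d \<ge> 0\<close>, \<open>c = d + m \<ge> 0\<close> and
    \<open>c + d \<ge> P - q\<^sub>0\<^sub>0 - q\<^sub>1\<^sub>1\<close>, after which \<open>P - c - d\<close> is split between \<open>g \<le> q\<^sub>0\<^sub>0\<close> and \<open>h \<le> q\<^sub>1\<^sub>1\<close>.\<close>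
  define d where "d = max (max 0 (- m)) ((P - 1 + q (False, True) + q (True, False) - m) / 2)"
  define c where "c = d + m"
  define g where "g = min (q (False, False)) (P - c - d)"
  define h where "h = P - c - d - g"
  have cd: "0 \<le> d" "d \<le> q (True, False)" "0 \<le> c" "c \<le> q (False, True)"
    "P - q (False, False) - q (True, True) \<le> c + d" "c + d \<le> P"
    using assms(3-6) q unfolding c_def d_def by (auto simp: max_def abs_le_iff field_simps)
  have gh: "0 \<le> g" "g \<le> q (False, False)" "0 \<le> h" "h \<le> q (True, True)"
    using cd q unfolding g_def h_def by (auto simp: min_def)
  define y where "y = (\<lambda>(j1, j2). if j1 then (if j2 then h else d) else (if j2 then c else g))"
  define x where "x = (\<lambda>i j. if i then y j else q j - y j)"
  have "0 \<le> x i j" for i j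
    using cd gh by (cases j) (auto simp: x_def y_def)
  moreover have "sum (x True) UNIV = P"
    by (simp add: x_def y_def sum_UNIV_bool_pair h_def)
  moreover have "x False (False, True) \<le> x False (True, False)"
    using assms(4) by (simp add: x_def y_def c_def)
  ultimately have "admissible_joint q P m x"
    by (simp add: admissible_joint_def x_def y_def c_def)
  then show ?thesis by blast
qed

lemma admissible_joint_of_mem_C_le:
  assumes "(P, D) \<in> C_le q"
  shows "\<bar>D\<bar> \<le> 1 \<and> (\<exists>x. admissible_joint q P (P * D) x)"
proof -
  obtain \<pi> \<chi> where P: "P = \<pi> True" and D: "D = chi2 \<chi> True True - chi1 \<chi> True True"
    and \<Theta>: "(\<pi>, \<chi>) \<in> Theta2" and \<mu>: "mu \<pi> \<chi> = q"
    and le: "chi1 \<chi> False False \<le> chi2 \<chi> False False"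
    using assms unfolding C_le_def by blast
  have \<pi>: "\<And>i. 0 \<le> \<pi> i" "\<pi> False + \<pi> True = 1"
    using \<Theta> by (auto simp: Theta2_def prob_dens_bool_iff)
  have \<chi>: "\<And>i j. 0 \<le> \<chi> i j"
    "\<And>i. \<chi> i (False, False) + \<chi> i (False, True) + \<chi> i (True, False) + \<chi> i (True, True) = 1"
    using \<Theta> by (auto simp: Theta2_def markov_def prob_dens_bool_pair_iff)
  have D': "D = \<chi> True (False, True) - \<chi> True (True, False)"
    using D by (simp add: chi1_def chi2_def)
  have "\<bar>D\<bar> \<le> 1"
    unfolding D' using \<chi>(2)[of True] \<chi>(1)[of True "(False, False)"] \<chi>(1)[of True "(False, True)"]
      \<chi>(1)[of True "(True, False)"] \<chi>(1)[of True "(True, True)"]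
    by (simp add: abs_le_iff)
  moreover have "\<chi> False (False, True) \<le> \<chi> False (True, False)"
    using le by (simp add: chi1_def chi2_def)
  then have "admissible_joint q P (P * D) (\<lambda>i j. \<pi> i * \<chi> i j)"
    using \<pi> \<chi> \<mu>
    by (auto simp: admissible_joint_def P D' mu_def UNIV_bool mult_left_mono
        sum_distrib_left[symmetric] prob_dens_bool_pair_iff right_diff_distrib
        sum_UNIV_bool_pair[symmetric])
  ultimately show ?thesis by blast
qed

text \<open>The conditional distribution on a row of mass zero is arbitrary; this choice realises
  the difference \<open>D\<close> on row \<open>1\<close> and satisfies the constraint on row \<open>0\<close>.\<close>

definition null_row_kernel :: "real \<Rightarrow> bool \<Rightarrow> bool \<times> bool \<Rightarrow> real" where
  "null_row_kernel D = (\<lambda>i (j1, j2). if i then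
      (if j1 then (if j2 then 0 else max (- D) 0) else (if j2 then max D 0 else 1 - \<bar>D\<bar>))
    else (if \<not> j1 \<and> \<not> j2 then 1 else 0))"

lemma null_row_kernel_markov: "\<bar>D\<bar> \<le> 1 \<Longrightarrow> null_row_kernel D \<in> markov"
  by (auto simp: markov_def prob_dens_bool_pair_iff null_row_kernel_def split: if_splits)

lemma mem_C_le_of_admissible_joint:
  assumes q: "q \<in> prob_dens" and D: "\<bar>D\<bar> \<le> 1" and x: "admissible_joint q P (P * D) x"
  shows "(P, D) \<in> C_le q"
proof -
  have x_nonneg: "\<And>i j. 0 \<le> x i j" and marg: "\<And>j. x False j + x True j = q j"
    and le: "x False (False, True) \<le> x False (True, False)"
    and diff: "x True (False, True) - x True (True, False) = P * D"
    and row1: "sum (x True) UNIV = P"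
    using x unfolding admissible_joint_def by blast+
  define \<pi> where "\<pi> = (\<lambda>i. sum (x i) UNIV)"
  obtain \<chi> where \<chi>: "\<chi> \<in> markov" and \<pi>\<chi>: "\<And>i j. \<pi> i * \<chi> i j = x i j"
    and null: "\<And>i. \<pi> i = 0 \<Longrightarrow> \<chi> i = null_row_kernel D i"
    using markov_disintegration[of x "null_row_kernel D"] x_nonneg null_row_kernel_markov[OF D]
    unfolding \<pi>_def by blast
  have \<pi>_nonneg: "0 \<le> \<pi> i" for i by (simp add: \<pi>_def x_nonneg sum_nonneg)
  have \<pi>True: "\<pi> True = P" using row1 by (simp add: \<pi>_def)
  have "\<pi> False + \<pi> True = sum q UNIV"
    by (simp add: \<pi>_def sum.distrib[symmetric] marg)
  also have "\<dots> = 1" using q by (simp add: prob_dens_def)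
  finally have "\<pi> \<in> prob_dens"
    using \<pi>_nonneg by (simp add: prob_dens_bool_iff)
  then have \<Theta>: "(\<pi>, \<chi>) \<in> Theta2" using \<chi> by (simp add: Theta2_def)
  have \<mu>: "mu \<pi> \<chi> = q"
    by (rule ext) (simp add: mu_def UNIV_bool \<pi>\<chi> marg)
  have "\<chi> False (False, True) \<le> \<chi> False (True, False)"
  proof (cases "\<pi> False = 0")
    case True
    then show ?thesis by (simp add: null null_row_kernel_def)
  next
    case False
    then have "0 < \<pi> False" using \<pi>_nonneg[of False] by simp
    then show ?thesis
      using le \<pi>\<chi>[of False "(False, True)"] \<pi>\<chi>[of False "(True, False)"]
      by (metis mult_le_cancel_left_pos)
  qed
  then have le: "chi1 \<chi> False False \<le> chi2 \<chi> False False"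
    by (simp add: chi1_def chi2_def)
  have "\<chi> True (False, True) - \<chi> True (True, False) = D"
  proof (cases "P = 0")
    case True
    then show ?thesis using \<pi>True by (simp add: null null_row_kernel_def max_def)
  next
    case False
    have "P * (\<chi> True (False, True) - \<chi> True (True, False)) = P * D"
      using diff \<pi>\<chi>[of True] by (simp add: \<pi>True right_diff_distrib)
    then show ?thesis using False by simp
  qed
  then have "D = chi2 \<chi> True True - chi1 \<chi> True True"
    by (simp add: chi1_def chi2_def)
  with \<Theta> \<mu> le \<pi>True show ?thesis
    unfolding C_le_def by force
qed

lemma mem_C_le_iff:
  assumes q: "q \<in> prob_dens"
  shows "(P, D) \<in> C_le q \<longleftrightarrow> 0 \<le> P \<and> P \<le> 1 \<and> \<bar>D\<bar> \<le> 1 \<and>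
           q (False, True) - q (True, False) \<le> P * D \<and> P * D \<le> q (False, True) \<and>
           P * D \<le> q (False, True) - q (True, False) + 1 - P"
proof
  assume "(P, D) \<in> C_le q"
  then obtain x where "\<bar>D\<bar> \<le> 1" and "admissible_joint q P (P * D) x"
    using admissible_joint_of_mem_C_le by blast
  then show "0 \<le> P \<and> P \<le> 1 \<and> \<bar>D\<bar> \<le> 1 \<and>
      q (False, True) - q (True, False) \<le> P * D \<and> P * D \<le> q (False, True) \<and>
      P * D \<le> q (False, True) - q (True, False) + 1 - P"
    using admissible_joint_bounds[OF _ q] by blast
next
  assume bounds: "0 \<le> P \<and> P \<le> 1 \<and> \<bar>D\<bar> \<le> 1 \<and>
      q (False, True) - q (True, False) \<le> P * D \<and> P * D \<le> q (False, True) \<and>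
      P * D \<le> q (False, True) - q (True, False) + 1 - P"
  then have "\<bar>P * D\<bar> \<le> P" by (simp add: abs_mult mult_left_le)
  with bounds show "(P, D) \<in> C_le q"
    using admissible_joint_exists[OF q] mem_C_le_of_admissible_joint[OF q] by blast
qed

theorem lemma9:
  fixes q :: "bool \<times> bool \<Rightarrow> real"
  assumes "q \<in> prob_dens"
  shows "C_le q \<noteq> {} \<and>
         C_le q = {(Pr, dSe). Pr \<in> {0..1} \<and> dSe \<in> {-1..1} \<and>
                    q (False, True) - q (True, False) \<le> Pr * dSe \<and>
                    Pr * dSe \<le> min (q (False, True)) (q (False, True) - q (True, False) + 1 - Pr)}"
    (is "_ \<and> _ = ?S")
proof -
  have eq: "C_le q = ?S"
    by (auto simp: mem_C_le_iff[OF assms] abs_le_iff)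
  have q: "0 \<le> q j" for j using assms unfolding prob_dens_def by blast
  have "q (False, False) + q (False, True) + q (True, False) + q (True, True) = 1"
    using assms by (simp add: prob_dens_bool_pair_iff)
  then have "(1, q (False, True) - q (True, False)) \<in> ?S"
    using q[of "(False, False)"] q[of "(False, True)"] q[of "(True, False)"] q[of "(True, True)"]
    by (simp add: min_def)
  with eq show ?thesis by blast
qed

end
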